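(* Let $(X,d)$ be a complete metric space and $\mathcal{S}=(X,(\phi_j)_{j=1}^L,(p_j)_{j=1}^L)$ an IFS with probabilities consisting of Banach contractions, and let $\alpha_\mathcal{S}:=\max\{\mathrm{Lip}(\phi_j):j=1,\dots,L\}$. Let $\varepsilon>0$, $\hat{X}$ a proper $\varepsilon$-net of $X$, $r:X\to\hat{X}$ a Borel measurable $\varepsilon$-projection, and $\hat{\mathcal{S}}:=(\hat{X},(\hat\phi_j)_{j=1}^L,(p_j)_{j=1}^L)$ with $\hat\phi_j:=(r\circ\phi_j)|_{\hat{X}}$. Then for any $\nu\in\mathcal{P}(\hat{X})$ and $n\in\mathbb{N}$, $$d_{MK}\big(e^\sharp(M^n_{\hat{\mathcal{S}}}(\nu)),\mu_\mathcal{S}\big)\le\frac{\varepsilon}{1-\alpha_\mathcal{S}}+\alpha_\mathcal{S}^n\,d_{MK}(e^\sharp(\nu),\mu_\mathcal{S}),$$ where $\mu_\mathcal{S}$ is the Hutchinson measure of $\mathcal{S}$. In particular, there is $n_0\in\mathbb{N}$ such that for every $n\ge n_0$, $d_{MK}(e^\sharp(M^n_{\hat{\mathcal{S}}}(\nu)),\mu_\mathcal{S})\le\frac{2\varepsilon}{1-\alpha_\mathcal{S}}$.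
   Context: An IFS with probabilities is $(X,(\phi_j)_{j=1}^L,(p_j)_{j=1}^L)$ with continuous $\phi_j:X\to X$ and $p_j>0$, $\sum p_j=1$; a Banach contraction is a map with Lipschitz constant $<1$. $\mathcal{P}(Y)$: Borel probability measures on $Y$ with compact support. $w^\sharp\mu(B)=\mu(w^{-1}(B))$. The Markov operator is $M_\mathcal{S}(\mu)=\sum_j p_j\phi_j^\sharp\mu$ on $\mathcal{P}(X)$, and $M_{\hat{\mathcal{S}}}(\nu)=\sum_j p_j\hat\phi_j^\sharp\nu$ on $\mathcal{P}(\hat X)$. $d_{MK}(\mu,\nu)=\sup\{|\int f d\mu-\int f d\nu|:f:X\to\mathbb{R},\ \mathrm{Lip}(f)\le1\}$. The Hutchinson measure $\mu_\mathcal{S}$ is the unique $\mu_\mathcal{S}\in\mathcal{P}(X)$ with $M_\mathcal{S}(\mu_\mathcal{S})=\mu_\mathcal{S}$ (and $M^k_\mathcal{S}(\mu)\to\mu_\mathcal{S}$ in $d_{MK}$ for every $\mu$). $e:\hat X\to X$ is the inclusion, so $e^\sharp\nu(B)=\nu(B\cap\hat X)$. $\hat X$ is an $\varepsilon$-net if every $x\in X$ is within $\varepsilon$ of some point of $\hat X$; proper if $D\cap\hat X$ is finite for every bounded $D$. $r$ is an $\varepsilon$-projection if $r|_{\hat X}=\mathrm{id}$ and $d(x,r(x))\le\varepsilon$ for all $x$. *)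

theory Defs
  imports "HOL-Probability.Probability"
begin

definition lip_const :: "('a::metric_space \<Rightarrow> 'b::metric_space) \<Rightarrow> real" where
  "lip_const f = Inf {C. 0 \<le> C \<and> C-lipschitz_on UNIV f}"

definition banach_contraction :: "('a::metric_space \<Rightarrow> 'a) \<Rightarrow> bool" where
  "banach_contraction f \<longleftrightarrow> (\<exists>C<1. C-lipschitz_on UNIV f)"

text \<open>P(Y): Borel probability measures on the subspace Y having compact support
  (i.e. concentrated on a compact subset of Y).\<close>
definition probs_cs :: "'a::metric_space set \<Rightarrow> 'a measure set" where
  "probs_cs Y = {M. sets M = sets (restrict_space borel Y) \<and> space M = Y \<and> prob_space M \<and>
      (\<exists>K. compact K \<and> K \<subseteq> Y \<and> emeasure M K = 1)}"

definition markov_op :: "nat \<Rightarrow> (nat \<Rightarrow> real) \<Rightarrow> (nat \<Rightarrow> 'a \<Rightarrow> 'a) \<Rightarrow> 'a measure \<Rightarrow> 'a measure" where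
  "markov_op L p f \<mu> = measure_of (space \<mu>) (sets \<mu>)
      (\<lambda>A. \<Sum>j<L. ennreal (p j) * emeasure (distr \<mu> \<mu> (f j)) A)"

definition d_MK :: "'a::metric_space measure \<Rightarrow> 'a measure \<Rightarrow> real" where
  "d_MK \<mu> \<nu> = Sup {\<bar>integral\<^sup>L \<mu> f - integral\<^sup>L \<nu> f\<bar> | f :: 'a \<Rightarrow> real. 1-lipschitz_on UNIV f}"

text \<open>Push-forward along the inclusion e of a subspace into the whole space.\<close>
definition incl_push :: "'a::topological_space measure \<Rightarrow> 'a measure" where
  "incl_push \<nu> = distr \<nu> borel (\<lambda>x. x)"

definition eps_net :: "real \<Rightarrow> 'a::metric_space set \<Rightarrow> bool" where
  "eps_net \<epsilon> Xh \<longleftrightarrow> Xh \<subseteq> UNIV \<and> (\<forall>x. \<exists>y\<in>Xh. dist x y \<le> \<epsilon>)"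

definition proper_set :: "'a::metric_space set \<Rightarrow> bool" where
  "proper_set Xh \<longleftrightarrow> (\<forall>D. bounded D \<longrightarrow> finite (D \<inter> Xh))"

definition eps_projection :: "real \<Rightarrow> 'a::metric_space set \<Rightarrow> ('a \<Rightarrow> 'a) \<Rightarrow> bool" where
  "eps_projection \<epsilon> Xh r \<longleftrightarrow> range r \<subseteq> Xh \<and> (\<forall>x\<in>Xh. r x = x) \<and> (\<forall>x. dist x (r x) \<le> \<epsilon>)"

end

theory Submission
  imports Defs
begin

(* A 1-Lipschitz test function f sees a Markov operator through
   integral f d(M nu) = sum_j p_j * integral (f o g_j) d nu.
   Comparing the discretised maps r o phi_j applied to nu with the maps phi_j applied to the
   invariant measure mu_S, each summand splits into |f o r o phi_j - f o phi_j| <= eps and the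
   difference of the integrals of the alpha-Lipschitz function f o phi_j against nu and mu_S,
   which is at most alpha * d_MK(nu, mu_S).  So the distances D_n of the iterates satisfy
   D_(n+1) <= eps + alpha * D_n, hence D_n <= eps / (1 - alpha) + alpha^n * D_0, and the second
   term eventually drops below eps / (1 - alpha).  The push-forward e# changes no integral. *)

section \<open>Markov operators\<close>

lemma sets_markov_op [measurable_cong]: "sets (markov_op L p g M) = sets M"
  unfolding markov_op_def by (simp add: sets.space_closed sets.sigma_sets_eq)

lemma space_markov_op: "space (markov_op L p g M) = space M"
  unfolding markov_op_def by (simp add: space_measure_of_conv)

lemma emeasure_markov_op:
  assumes A: "A \<in> sets M"
  shows "emeasure (markov_op L p g M) A = (\<Sum>j<L. ennreal (p j) * emeasure (distr M M (g j)) A)"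
proof -
  let ?\<mu> = "\<lambda>A. \<Sum>j<L. ennreal (p j) * emeasure (distr M M (g j)) A"
  have "countably_additive (sets M) ?\<mu>"
  proof (rule countably_additiveI)
    fix B :: "nat \<Rightarrow> 'a set"
    assume B: "range B \<subseteq> sets M" "disjoint_family B"
    have "(\<Sum>i. ?\<mu> (B i)) = (\<Sum>j<L. \<Sum>i. ennreal (p j) * emeasure (distr M M (g j)) (B i))"
      by (rule suminf_sum) (rule summableI)
    also have "\<dots> = ?\<mu> (\<Union> (range B))"
      using B by (simp add: suminf_emeasure)
    finally show "(\<Sum>i. ?\<mu> (B i)) = ?\<mu> (\<Union> (range B))" .
  qed
  then show ?thesis
    unfolding markov_op_def
    by (intro emeasure_measure_of_sigma[OF sets.sigma_algebra_axioms _ _ A]) (simp_all add: positive_def)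
qed

lemma emeasure_markov_op_eq_1:
  assumes p: "\<And>j. j < L \<Longrightarrow> 0 \<le> p j" and p_sum: "(\<Sum>j<L. p j) = 1"
    and A: "A \<in> sets M" and full: "\<And>j. j < L \<Longrightarrow> emeasure (distr M M (g j)) A = 1"
  shows "emeasure (markov_op L p g M) A = 1"
proof -
  have "emeasure (markov_op L p g M) A = (\<Sum>j<L. ennreal (p j))"
    using A full by (simp add: emeasure_markov_op)
  also have "\<dots> = 1"
    using p p_sum sum_ennreal[of "{..<L}" p] by simp
  finally show ?thesis .
qed

lemma nn_integral_weighted_sum_measures:
  fixes c :: "'i \<Rightarrow> ennreal"
  assumes sets_N: "sets N = sets M" and sets_Ms: "\<And>j. j \<in> J \<Longrightarrow> sets (Ms j) = sets M"
    and emeasure_N: "\<And>A. A \<in> sets M \<Longrightarrow> emeasure N A = (\<Sum>j\<in>J. c j * emeasure (Ms j) A)"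
    and h: "h \<in> borel_measurable M"
  shows "(\<integral>\<^sup>+x. h x \<partial>N) = (\<Sum>j\<in>J. c j * (\<integral>\<^sup>+x. h x \<partial>Ms j))"
  using h
proof (induction rule: borel_measurable_induct)
  case (cong f g)
  have "space N = space M" "\<And>j. j \<in> J \<Longrightarrow> space (Ms j) = space M"
    using sets_eq_imp_space_eq[OF sets_N] sets_eq_imp_space_eq[OF sets_Ms] by auto
  with cong show ?case
    by (metis (no_types, lifting) nn_integral_cong sum.cong)
next
  case (set A)
  then show ?case
    using sets_N sets_Ms emeasure_N by simp
next
  case (mult u a)
  then show ?case
    using sets_N sets_Ms
    by (simp add: nn_integral_cmult sum_distrib_left mult.left_commute cong: measurable_cong_sets)
next
  case (add u v)
  then show ?case
    using sets_N sets_Ms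
    by (simp add: nn_integral_add distrib_left sum.distrib cong: measurable_cong_sets)
next
  case (seq U)
  have "(\<integral>\<^sup>+x. Sup (range U) x \<partial>N) = (SUP i. \<Sum>j\<in>J. c j * (\<integral>\<^sup>+x. U i x \<partial>Ms j))"
    using nn_integral_monotone_convergence_SUP[OF \<open>incseq U\<close>, of N] seq sets_N
    by (simp add: image_image cong: measurable_cong_sets)
  also have "\<dots> = (\<Sum>j\<in>J. SUP i. c j * (\<integral>\<^sup>+x. U i x \<partial>Ms j))"
    using seq(3) sets_Ms
    by (intro ennreal_SUP_sum) (auto simp: incseq_def le_fun_def intro!: mult_left_mono nn_integral_mono)
  also have "\<dots> = (\<Sum>j\<in>J. c j * (\<integral>\<^sup>+x. Sup (range U) x \<partial>Ms j))"
  proof (rule sum.cong[OF refl])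
    fix j assume "j \<in> J"
    then show "(SUP i. c j * (\<integral>\<^sup>+x. U i x \<partial>Ms j)) = c j * (\<integral>\<^sup>+x. Sup (range U) x \<partial>Ms j)"
      using nn_integral_monotone_convergence_SUP[OF \<open>incseq U\<close>, of "Ms j"] seq sets_Ms
      by (simp add: SUP_mult_left_ennreal image_image cong: measurable_cong_sets)
  qed
  finally show ?case .
qed

lemma integral_weighted_sum_measures:
  fixes c :: "'i \<Rightarrow> real" and f :: "'a \<Rightarrow> real"
  assumes J: "finite J" and c: "\<And>j. j \<in> J \<Longrightarrow> 0 \<le> c j"
    and sets_N: "sets N = sets M" and sets_Ms: "\<And>j. j \<in> J \<Longrightarrow> sets (Ms j) = sets M"
    and emeasure_N: "\<And>A. A \<in> sets M \<Longrightarrow> emeasure N A = (\<Sum>j\<in>J. ennreal (c j) * emeasure (Ms j) A)"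
    and f: "f \<in> borel_measurable M" and integrable_Ms: "\<And>j. j \<in> J \<Longrightarrow> integrable (Ms j) f"
  shows "integral\<^sup>L N f = (\<Sum>j\<in>J. c j * integral\<^sup>L (Ms j) f)"
proof -
  note nn_integral_N = nn_integral_weighted_sum_measures[OF sets_N sets_Ms emeasure_N]
  have finite_Ms: "(\<integral>\<^sup>+x. ennreal (f x) \<partial>Ms j) < \<infinity>" "(\<integral>\<^sup>+x. ennreal (- f x) \<partial>Ms j) < \<infinity>"
    if "j \<in> J" for j
    using integrable_Ms[OF that] by (auto simp: real_integrable_def top.not_eq_extremum)
  have finite_N: "(\<integral>\<^sup>+x. ennreal (f x) \<partial>N) < \<infinity>" "(\<integral>\<^sup>+x. ennreal (- f x) \<partial>N) < \<infinity>"
    using J f finite_Ms by (simp_all add: nn_integral_N ennreal_mult_less_top)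
  then have "integrable N f"
    using f sets_N by (simp add: real_integrable_def less_top cong: measurable_cong_sets)
  then have "integral\<^sup>L N f = enn2real (\<integral>\<^sup>+x. ennreal (f x) \<partial>N) - enn2real (\<integral>\<^sup>+x. ennreal (- f x) \<partial>N)"
    by (rule real_lebesgue_integral_def)
  also have "\<dots> = (\<Sum>j\<in>J. c j * (enn2real (\<integral>\<^sup>+x. ennreal (f x) \<partial>Ms j) - enn2real (\<integral>\<^sup>+x. ennreal (- f x) \<partial>Ms j)))"
    using f finite_Ms c
    by (simp add: nn_integral_N enn2real_sum ennreal_mult_less_top enn2real_mult right_diff_distrib sum_subtractf)
  also have "\<dots> = (\<Sum>j\<in>J. c j * integral\<^sup>L (Ms j) f)"
    using integrable_Ms by (simp add: real_lebesgue_integral_def)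
  finally show ?thesis .
qed

lemma integral_markov_op:
  fixes f :: "'a \<Rightarrow> real"
  assumes g: "\<And>j. j < L \<Longrightarrow> g j \<in> measurable M M" and p: "\<And>j. j < L \<Longrightarrow> 0 \<le> p j"
    and f: "f \<in> borel_measurable M" and integrable_g: "\<And>j. j < L \<Longrightarrow> integrable M (\<lambda>x. f (g j x))"
  shows "integral\<^sup>L (markov_op L p g M) f = (\<Sum>j<L. p j * integral\<^sup>L M (\<lambda>x. f (g j x)))"
proof -
  have integrable_distr: "integrable (distr M M (g j)) f" if "j \<in> {..<L}" for j
    using that g f integrable_g by (simp add: integrable_distr_eq)
  note weighted = sets_markov_op _ emeasure_markov_op f integrable_distr
  have "integral\<^sup>L (markov_op L p g M) f = (\<Sum>j<L. p j * integral\<^sup>L (distr M M (g j)) f)"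
    using p by (intro integral_weighted_sum_measures[OF _ _ weighted]) auto
  also have "\<dots> = (\<Sum>j<L. p j * integral\<^sup>L M (\<lambda>x. f (g j x)))"
    using g f by (simp add: integral_distr)
  finally show ?thesis .
qed

section \<open>Compactly supported probability measures\<close>

lemma probs_cs_prob_space: "M \<in> probs_cs Y \<Longrightarrow> prob_space M"
  unfolding probs_cs_def by blast

lemma sets_probs_cs: "M \<in> probs_cs Y \<Longrightarrow> sets M = sets (restrict_space borel Y)"
  unfolding probs_cs_def by blast

lemma probs_cs_supportE:
  assumes "M \<in> probs_cs Y"
  obtains K where "compact K" "K \<subseteq> Y" "AE x in M. x \<in> K"
proof -
  obtain K where K: "compact K" "K \<subseteq> Y" "emeasure M K = 1"
    and sets_M: "sets M = sets (restrict_space borel Y)" and "prob_space M"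
    using assms unfolding probs_cs_def by blast
  then interpret prob_space M by simp
  have "K \<in> sets M"
    using K sets_M by (auto simp: sets_restrict_space compact_imp_closed borel_closed)
  then have "AE x in M. x \<in> K"
    using K by (intro AE_prob_1) (simp add: measure_def)
  with K that show ?thesis by blast
qed

lemma measurable_on_restrict_borel:
  assumes "sets M = sets (restrict_space borel Y)" "f \<in> measurable borel N"
  shows "f \<in> measurable M N"
  using measurable_restrict_space1[OF assms(2)] by (simp only: measurable_cong_sets[OF assms(1) refl])

lemma measurable_restrict_borel_self:
  assumes "sets M = sets (restrict_space borel Y)" "g \<in> borel_measurable borel" "g ` Y \<subseteq> Y"
  shows "g \<in> measurable M M"
proof -
  have "g \<in> measurable (restrict_space borel Y) (restrict_space borel Y)"
    using assms(3) measurable_restrict_space1[OF assms(2)]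
    by (intro measurable_restrict_space2) (auto simp: space_restrict_space)
  then show ?thesis
    by (simp only: measurable_cong_sets[OF assms(1) assms(1)])
qed

lemma borel_measurable_lipschitz: "C-lipschitz_on UNIV f \<Longrightarrow> f \<in> borel_measurable borel"
  by (simp add: borel_measurable_continuous_onI lipschitz_on_continuous_on)

lemma integrable_continuous_probs_cs:
  fixes f :: "'a::metric_space \<Rightarrow> real"
  assumes M: "M \<in> probs_cs Y" and f: "continuous_on UNIV f"
  shows "integrable M f"
proof -
  interpret prob_space M
    using M by (rule probs_cs_prob_space)
  obtain K where K: "compact K" "AE x in M. x \<in> K"
    using M by (rule probs_cs_supportE)
  obtain B where "\<forall>x\<in>K. \<bar>f x\<bar> \<le> B"
    using compact_imp_bounded[OF compact_continuous_image[OF continuous_on_subset[OF f] K(1)]]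
    by (auto simp: bounded_iff)
  with K(2) have "AE x in M. norm (f x) \<le> B"
    by auto
  moreover have "f \<in> borel_measurable M"
    using measurable_on_restrict_borel[OF sets_probs_cs[OF M] borel_measurable_continuous_onI[OF f]] .
  ultimately show ?thesis
    by (rule integrable_const_bound)
qed

lemma (in finite_measure) integrable_if_close_to_integrable:
  fixes f g :: "'a \<Rightarrow> real"
  assumes g: "integrable M g" and f: "f \<in> borel_measurable M"
    and close: "\<And>x. x \<in> space M \<Longrightarrow> \<bar>f x - g x\<bar> \<le> c"
  shows "integrable M f"
proof -
  have "integrable M (\<lambda>x. f x - g x)"
    using close f g by (intro integrable_const_bound[where B=c]) auto
  then have "integrable M (\<lambda>x. (f x - g x) + g x)"
    using g by (rule Bochner_Integration.integrable_add)
  then show ?thesis by simp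
qed

lemma compact_subset_proper_set_finite:
  assumes "proper_set Y" "compact K" "K \<subseteq> Y"
  shows "finite K"
  using assms compact_imp_bounded Int_absorb2 unfolding proper_set_def by metis

(* The g j need not be continuous, so the image of a compact support need not be compact;
   properness makes the support finite, and finite supports are preserved. *)
lemma markov_op_probs_cs_proper_set:
  assumes Y: "proper_set Y" and \<nu>: "\<nu> \<in> probs_cs Y"
    and g: "\<And>j. j < L \<Longrightarrow> g j \<in> borel_measurable borel" and g_Y: "\<And>j. j < L \<Longrightarrow> g j ` Y \<subseteq> Y"
    and p: "\<And>j. j < L \<Longrightarrow> 0 \<le> p j" and p_sum: "(\<Sum>j<L. p j) = 1"
  shows "markov_op L p g \<nu> \<in> probs_cs Y"
proof -
  interpret prob_space \<nu>
    using \<nu> by (rule probs_cs_prob_space)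
  have g_\<nu>: "g j \<in> measurable \<nu> \<nu>" if "j < L" for j
    using measurable_restrict_borel_self[OF sets_probs_cs[OF \<nu>] g g_Y] that by blast
  obtain K where K: "compact K" "K \<subseteq> Y" "emeasure \<nu> K = 1"
    and sets_\<nu>: "sets \<nu> = sets (restrict_space borel Y)" and space_\<nu>: "space \<nu> = Y"
    using \<nu> unfolding probs_cs_def by blast
  define K' where "K' = (\<Union>j<L. g j ` K)"
  have "finite K"
    using compact_subset_proper_set_finite[OF Y K(1,2)] .
  then have K': "finite K'" "K' \<subseteq> Y"
    using K(2) g_Y unfolding K'_def by auto
  then have K'_sets: "K' \<in> sets \<nu>"
    using sets_\<nu> by (auto simp: sets_restrict_space finite_imp_closed borel_closed)
  have full: "emeasure (distr \<nu> \<nu> (g j)) K' = 1" if j: "j < L" for j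
  proof -
    have "K \<subseteq> g j -` K' \<inter> space \<nu>"
      using K(2) j space_\<nu> unfolding K'_def by auto
    then have "1 \<le> emeasure \<nu> (g j -` K' \<inter> space \<nu>)"
      using K(3) emeasure_mono measurable_sets[OF g_\<nu>[OF j] K'_sets] by metis
    then show ?thesis
      using emeasure_distr[OF g_\<nu>[OF j] K'_sets] by (simp add: antisym emeasure_le_1)
  qed
  have full_space: "emeasure (distr \<nu> \<nu> (g j)) (space \<nu>) = 1" if "j < L" for j
    using prob_space.emeasure_space_1[OF prob_space_distr[OF g_\<nu>[OF that]]] by simp
  have "emeasure (markov_op L p g \<nu>) (space (markov_op L p g \<nu>)) = 1"
    unfolding space_markov_op by (rule emeasure_markov_op_eq_1[OF p p_sum sets.top full_space])
  moreover have "emeasure (markov_op L p g \<nu>) K' = 1"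
    by (rule emeasure_markov_op_eq_1[OF p p_sum K'_sets full])
  ultimately show ?thesis
    using K' sets_\<nu> space_\<nu> finite_imp_compact
    by (auto simp: probs_cs_def sets_markov_op space_markov_op intro: prob_spaceI)
qed

lemma integral_incl_push:
  fixes f :: "'a::metric_space \<Rightarrow> real"
  assumes sets_\<nu>: "sets \<nu> = sets (restrict_space borel Y)" and f: "f \<in> borel_measurable borel"
  shows "integral\<^sup>L (incl_push \<nu>) f = integral\<^sup>L \<nu> f"
  using integral_distr[OF measurable_on_restrict_borel[OF sets_\<nu> measurable_ident_sets[OF refl]] f]
  unfolding incl_push_def by simp

section \<open>The Monge-Kantorovich distance\<close>

lemma (in prob_space) abs_integral_diff_le_const:
  fixes f g :: "'a \<Rightarrow> real"
  assumes "integrable M f" "integrable M g" and close: "AE x in M. \<bar>f x - g x\<bar> \<le> c"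
  shows "\<bar>integral\<^sup>L M f - integral\<^sup>L M g\<bar> \<le> c"
proof -
  have "\<bar>integral\<^sup>L M f - integral\<^sup>L M g\<bar> = \<bar>\<integral>x. f x - g x \<partial>M\<bar>"
    using assms by simp
  also have "\<dots> \<le> (\<integral>x. \<bar>f x - g x\<bar> \<partial>M)"
    by (rule integral_abs_bound)
  also have "\<dots> \<le> c"
    using assms by (intro integral_le_const) auto
  finally show ?thesis .
qed

lemma probs_cs_integral_lipschitz_boundedE:
  fixes a :: "'a::metric_space"
  assumes M: "M \<in> probs_cs Y"
  obtains b where "\<And>f::'a \<Rightarrow> real. 1-lipschitz_on UNIV f \<Longrightarrow> \<bar>integral\<^sup>L M f - f a\<bar> \<le> b"
proof -
  interpret prob_space M
    using M by (rule probs_cs_prob_space)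
  obtain K where K: "compact K" "AE x in M. x \<in> K"
    using M by (rule probs_cs_supportE)
  obtain b where b: "\<And>x. x \<in> K \<Longrightarrow> dist x a \<le> b"
    using bounded_any_center[of K a] compact_imp_bounded[OF K(1)] by (metis dist_commute)
  have "\<bar>integral\<^sup>L M f - f a\<bar> \<le> b" if f: "1-lipschitz_on UNIV f" for f :: "'a \<Rightarrow> real"
  proof -
    have "\<bar>f x - f a\<bar> \<le> b" if "x \<in> K" for x
      using lipschitz_onD[OF f, of x a] b[OF that] by (simp add: dist_real_def)
    with K(2) have "AE x in M. \<bar>f x - f a\<bar> \<le> b"
      by auto
    moreover have "integrable M f"
      using M f by (intro integrable_continuous_probs_cs lipschitz_on_continuous_on)
    ultimately show ?thesis
      using abs_integral_diff_le_const[of f "\<lambda>_. f a"] by (simp add: prob_space)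
  qed
  then show ?thesis
    using that by blast
qed

lemma abs_integral_diff_le_d_MK:
  fixes f :: "'a::metric_space \<Rightarrow> real"
  assumes \<mu>: "\<mu> \<in> probs_cs Y" and \<nu>: "\<nu> \<in> probs_cs Z" and f: "1-lipschitz_on UNIV f"
  shows "\<bar>integral\<^sup>L \<mu> f - integral\<^sup>L \<nu> f\<bar> \<le> d_MK \<mu> \<nu>"
proof -
  obtain b\<mu> b\<nu> where
    "\<And>f::'a \<Rightarrow> real. 1-lipschitz_on UNIV f \<Longrightarrow> \<bar>integral\<^sup>L \<mu> f - f undefined\<bar> \<le> b\<mu>"
    "\<And>f::'a \<Rightarrow> real. 1-lipschitz_on UNIV f \<Longrightarrow> \<bar>integral\<^sup>L \<nu> f - f undefined\<bar> \<le> b\<nu>"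
    using probs_cs_integral_lipschitz_boundedE[OF \<mu>] probs_cs_integral_lipschitz_boundedE[OF \<nu>] by metis
  then have "bdd_above {\<bar>integral\<^sup>L \<mu> f - integral\<^sup>L \<nu> f\<bar> | f :: 'a \<Rightarrow> real. 1-lipschitz_on UNIV f}"
    by (intro bdd_aboveI[where M="b\<mu> + b\<nu>"]) fastforce
  then show ?thesis
    unfolding d_MK_def using f by (intro cSup_upper) auto
qed

lemma abs_integral_diff_le_lipschitz_d_MK:
  fixes g :: "'a::metric_space \<Rightarrow> real"
  assumes \<mu>: "\<mu> \<in> probs_cs Y" and \<nu>: "\<nu> \<in> probs_cs Z" and g: "C-lipschitz_on UNIV g"
  shows "\<bar>integral\<^sup>L \<mu> g - integral\<^sup>L \<nu> g\<bar> \<le> C * d_MK \<mu> \<nu>"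
proof (cases "C = 0")
  case True
  have g_const: "g = (\<lambda>_. g undefined)"
  proof
    show "g x = g undefined" for x
      using lipschitz_onD[OF g, of x undefined] True by simp
  qed
  have "integral\<^sup>L M g = g undefined" if "prob_space M" for M
    by (subst g_const) (simp add: prob_space.prob_space[OF that])
  then show ?thesis
    using True probs_cs_prob_space[OF \<mu>] probs_cs_prob_space[OF \<nu>] by simp
next
  case False
  then have C: "C > 0"
    using lipschitz_on_nonneg[OF g] by simp
  have "1-lipschitz_on UNIV (\<lambda>x. (1 / C) * g x)"
    using lipschitz_on_cmult_real_nonneg[OF g, of "1 / C"] C by simp
  from abs_integral_diff_le_d_MK[OF \<mu> \<nu> this]
  have "\<bar>integral\<^sup>L \<mu> g - integral\<^sup>L \<nu> g\<bar> / C \<le> d_MK \<mu> \<nu>"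
    using C by (simp add: diff_divide_distrib[symmetric])
  with C show ?thesis
    by (simp add: divide_le_eq mult.commute)
qed

lemma d_MK_le:
  assumes "\<And>f::'a::metric_space \<Rightarrow> real. 1-lipschitz_on UNIV f \<Longrightarrow> \<bar>integral\<^sup>L \<mu> f - integral\<^sup>L \<nu> f\<bar> \<le> c"
  shows "d_MK \<mu> \<nu> \<le> c"
proof -
  have "1-lipschitz_on UNIV (\<lambda>_::'a. 0::real)"
    by (rule lipschitz_onI) auto
  then show ?thesis
    unfolding d_MK_def using assms by (intro cSup_least) auto
qed

lemma d_MK_incl_push:
  assumes "sets \<nu> = sets (restrict_space borel Y)"
  shows "d_MK (incl_push \<nu>) \<mu> = d_MK \<nu> \<mu>"
proof -
  have eq: "integral\<^sup>L (incl_push \<nu>) f = integral\<^sup>L \<nu> f" if "1-lipschitz_on UNIV f" for f :: "'a \<Rightarrow> real"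
    using integral_incl_push[OF assms borel_measurable_lipschitz[OF that]] .
  show ?thesis
    unfolding d_MK_def by (intro arg_cong[where f=Sup] Collect_cong ex_cong1) (auto simp: eq)
qed

section \<open>Lipschitz constants of contractions\<close>

lemma lipschitz_on_lip_const:
  fixes f :: "'a::metric_space \<Rightarrow> 'b::metric_space"
  assumes f: "C-lipschitz_on UNIV f"
  shows "(lip_const f)-lipschitz_on UNIV f" and "lip_const f \<le> C"
proof -
  define S where "S = {C. 0 \<le> C \<and> C-lipschitz_on UNIV f}"
  have S: "C \<in> S" "bdd_below S"
    using f lipschitz_on_nonneg unfolding S_def by (blast, auto intro: bdd_belowI[of _ 0])
  have lip_const_S: "lip_const f = Inf S"
    unfolding lip_const_def S_def ..
  show "lip_const f \<le> C"
    unfolding lip_const_S using S by (rule cInf_lower)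
  show "(lip_const f)-lipschitz_on UNIV f"
  proof (rule lipschitz_onI)
    show "0 \<le> lip_const f"
      unfolding lip_const_S using S(1) by (intro cInf_greatest) (auto simp: S_def)
    show "dist (f x) (f y) \<le> lip_const f * dist x y" for x y
    proof (cases "x = y")
      case False
      have "dist (f x) (f y) / dist x y \<le> Inf S"
        using S(1) False by (intro cInf_greatest) (auto simp: S_def divide_le_eq intro: lipschitz_onD)
      with False show ?thesis
        unfolding lip_const_S by (simp add: divide_le_eq)
    qed simp
  qed
qed

lemma banach_contraction_lip_const:
  assumes "banach_contraction f"
  shows "lip_const f < 1" and "(lip_const f)-lipschitz_on UNIV f"
  using assms lipschitz_on_lip_const unfolding banach_contraction_def by (fastforce, blast)

lemma Max_lip_const_contractions:
  assumes J: "finite J" "J \<noteq> {}" and contr: "\<And>j. j \<in> J \<Longrightarrow> banach_contraction (\<phi> j)"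
  shows "Max ((\<lambda>j. lip_const (\<phi> j)) ` J) < 1"
    and "\<And>j. j \<in> J \<Longrightarrow> (Max ((\<lambda>j. lip_const (\<phi> j)) ` J))-lipschitz_on UNIV (\<phi> j)"
proof -
  show "Max ((\<lambda>j. lip_const (\<phi> j)) ` J) < 1"
    using J banach_contraction_lip_const(1)[OF contr] by auto
  show "(Max ((\<lambda>j. lip_const (\<phi> j)) ` J))-lipschitz_on UNIV (\<phi> j)" if "j \<in> J" for j
    using lipschitz_on_mono[OF banach_contraction_lip_const(2)[OF contr[OF that]] subset_refl] J that
    by simp
qed

section \<open>Iterating the discretised Markov operator\<close>

lemma abs_lipschitz_projection_diff_le:
  fixes f :: "'a::metric_space \<Rightarrow> real"
  assumes f: "1-lipschitz_on UNIV f" and r_close: "\<And>x. dist x (r x) \<le> \<epsilon>"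
  shows "\<bar>f (r x) - f x\<bar> \<le> \<epsilon>"
  using lipschitz_onD[OF f, of "r x" x] r_close[of x] by (simp add: dist_real_def dist_commute)

lemma integrable_lipschitz_projection_comp:
  fixes f :: "'a::metric_space \<Rightarrow> real"
  assumes M: "M \<in> probs_cs Y" and f: "1-lipschitz_on UNIV f" and \<phi>: "continuous_on UNIV \<phi>"
    and r: "r \<in> borel_measurable borel" and r_close: "\<And>x. dist x (r x) \<le> \<epsilon>"
  shows "integrable M (\<lambda>x. f (r (\<phi> x)))"
proof -
  interpret prob_space M
    using M by (rule probs_cs_prob_space)
  have f_\<phi>: "continuous_on UNIV (\<lambda>x. f (\<phi> x))"
    using continuous_on_compose2[OF lipschitz_on_continuous_on[OF f] \<phi>] by simp
  have [measurable]: "f \<in> borel_measurable borel" "\<phi> \<in> borel_measurable borel"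
    using borel_measurable_lipschitz[OF f] \<phi> by (simp_all add: borel_measurable_continuous_onI)
  have "(\<lambda>x. f (r (\<phi> x))) \<in> borel_measurable borel"
    using r by measurable
  then have "(\<lambda>x. f (r (\<phi> x))) \<in> borel_measurable M"
    by (rule measurable_on_restrict_borel[OF sets_probs_cs[OF M]])
  moreover have "\<bar>f (r (\<phi> x)) - f (\<phi> x)\<bar> \<le> \<epsilon>" for x
    using f r_close by (rule abs_lipschitz_projection_diff_le)
  ultimately show ?thesis
    using integrable_if_close_to_integrable[OF integrable_continuous_probs_cs[OF M f_\<phi>]] by blast
qed

lemma abs_integral_projection_diff_le:
  fixes f :: "'a::metric_space \<Rightarrow> real"
  assumes \<nu>: "\<nu> \<in> probs_cs Y" and \<mu>: "\<mu> \<in> probs_cs Z" and f: "1-lipschitz_on UNIV f"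
    and \<phi>: "\<alpha>-lipschitz_on UNIV \<phi>" and r: "r \<in> borel_measurable borel"
    and r_close: "\<And>x. dist x (r x) \<le> \<epsilon>"
  shows "\<bar>(\<integral>x. f (r (\<phi> x)) \<partial>\<nu>) - (\<integral>x. f (\<phi> x) \<partial>\<mu>)\<bar> \<le> \<epsilon> + \<alpha> * d_MK \<nu> \<mu>"
proof -
  interpret prob_space \<nu>
    using \<nu> by (rule probs_cs_prob_space)
  have f_\<phi>: "\<alpha>-lipschitz_on UNIV (\<lambda>x. f (\<phi> x))"
    using lipschitz_on_compose2[OF \<phi> lipschitz_on_subset[OF f]] by simp
  have "\<bar>(\<integral>x. f (r (\<phi> x)) \<partial>\<nu>) - (\<integral>x. f (\<phi> x) \<partial>\<nu>)\<bar> \<le> \<epsilon>"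
    using \<nu> f r r_close lipschitz_on_continuous_on[OF \<phi>] lipschitz_on_continuous_on[OF f_\<phi>]
    by (intro abs_integral_diff_le_const integrable_lipschitz_projection_comp integrable_continuous_probs_cs
        AE_I2 abs_lipschitz_projection_diff_le)
  moreover have "\<bar>(\<integral>x. f (\<phi> x) \<partial>\<nu>) - (\<integral>x. f (\<phi> x) \<partial>\<mu>)\<bar> \<le> \<alpha> * d_MK \<nu> \<mu>"
    by (rule abs_integral_diff_le_lipschitz_d_MK[OF \<nu> \<mu> f_\<phi>])
  ultimately show ?thesis
    by linarith
qed

lemma abs_convex_combination_le:
  fixes a :: "'i \<Rightarrow> real"
  assumes p: "\<And>j. j \<in> J \<Longrightarrow> 0 \<le> p j" and p_sum: "sum p J = 1" and a: "\<And>j. j \<in> J \<Longrightarrow> \<bar>a j\<bar> \<le> c"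
  shows "\<bar>\<Sum>j\<in>J. p j * a j\<bar> \<le> c"
proof -
  have "\<bar>\<Sum>j\<in>J. p j * a j\<bar> \<le> (\<Sum>j\<in>J. p j * c)"
    using p a by (intro order_trans[OF sum_abs] sum_mono) (simp add: abs_mult mult_left_mono)
  also have "\<dots> = c"
    using p_sum by (simp add: sum_distrib_right[symmetric])
  finally show ?thesis .
qed

lemma d_MK_markov_op_projection_le:
  fixes \<phi> :: "nat \<Rightarrow> 'a::metric_space \<Rightarrow> 'a"
  assumes \<nu>: "\<nu> \<in> probs_cs Y" and \<mu>: "\<mu> \<in> probs_cs UNIV" and \<mu>_fixed: "markov_op L p \<phi> \<mu> = \<mu>"
    and p: "\<And>j. j < L \<Longrightarrow> 0 \<le> p j" and p_sum: "(\<Sum>j<L. p j) = 1"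
    and \<phi>: "\<And>j. j < L \<Longrightarrow> \<alpha>-lipschitz_on UNIV (\<phi> j)"
    and r: "r \<in> borel_measurable borel" and r_Y: "range r \<subseteq> Y" and r_close: "\<And>x. dist x (r x) \<le> \<epsilon>"
  shows "d_MK (markov_op L p (\<lambda>j. r \<circ> \<phi> j) \<nu>) \<mu> \<le> \<epsilon> + \<alpha> * d_MK \<nu> \<mu>"
proof (rule d_MK_le)
  fix f :: "'a \<Rightarrow> real"
  assume f: "1-lipschitz_on UNIV f"
  note f_borel = borel_measurable_lipschitz[OF f]
  note \<phi>_borel = borel_measurable_lipschitz[OF \<phi>]
  have g_\<nu>: "r \<circ> \<phi> j \<in> measurable \<nu> \<nu>" if "j < L" for j
    using r_Y measurable_comp[OF \<phi>_borel[OF that] r]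
    by (intro measurable_restrict_borel_self[OF sets_probs_cs[OF \<nu>]]) auto
  have "integral\<^sup>L (markov_op L p (\<lambda>j. r \<circ> \<phi> j) \<nu>) f = (\<Sum>j<L. p j * (\<integral>x. f (r (\<phi> j x)) \<partial>\<nu>))"
    using p g_\<nu> measurable_on_restrict_borel[OF sets_probs_cs[OF \<nu>] f_borel]
      integrable_lipschitz_projection_comp[OF \<nu> f lipschitz_on_continuous_on[OF \<phi>] r r_close]
    by (subst integral_markov_op) auto
  moreover have "integral\<^sup>L \<mu> f = (\<Sum>j<L. p j * (\<integral>x. f (\<phi> j x) \<partial>\<mu>))"
    using p \<phi>_borel measurable_on_restrict_borel[OF sets_probs_cs[OF \<mu>] f_borel]
      integrable_continuous_probs_cs[OF \<mu> lipschitz_on_continuous_on[OF lipschitz_on_compose2[OF \<phi> lipschitz_on_subset[OF f]]]]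
    by (subst (1) \<mu>_fixed[symmetric], subst integral_markov_op)
      (auto intro: measurable_restrict_borel_self[OF sets_probs_cs[OF \<mu>]])
  ultimately have "\<bar>integral\<^sup>L (markov_op L p (\<lambda>j. r \<circ> \<phi> j) \<nu>) f - integral\<^sup>L \<mu> f\<bar>
      = \<bar>\<Sum>j<L. p j * ((\<integral>x. f (r (\<phi> j x)) \<partial>\<nu>) - (\<integral>x. f (\<phi> j x) \<partial>\<mu>))\<bar>"
    by (simp add: sum_subtractf right_diff_distrib)
  also have "\<dots> \<le> \<epsilon> + \<alpha> * d_MK \<nu> \<mu>"
    using p p_sum \<nu> \<mu> f \<phi> r r_close
    by (intro abs_convex_combination_le abs_integral_projection_diff_le) auto
  finally show "\<bar>integral\<^sup>L (markov_op L p (\<lambda>j. r \<circ> \<phi> j) \<nu>) f - integral\<^sup>L \<mu> f\<bar> \<le> \<epsilon> + \<alpha> * d_MK \<nu> \<mu>" .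
qed

lemma affine_recurrence_le:
  fixes D :: "nat \<Rightarrow> real"
  assumes step: "\<And>n. D (Suc n) \<le> c + a * D n" and c: "0 \<le> c" and a: "0 \<le> a" "a < 1"
  shows "D n \<le> c / (1 - a) + a ^ n * D 0"
proof (induction n)
  case 0
  then show ?case
    using c a by simp
next
  case (Suc n)
  have "D (Suc n) \<le> c + a * (c / (1 - a) + a ^ n * D 0)"
    using step[of n] mult_left_mono[OF Suc a(1)] by linarith
  also have "\<dots> = c / (1 - a) + a ^ Suc n * D 0"
    using a by (simp add: field_simps)
  finally show ?case .
qed

lemma eventually_le_double_of_geometric_bound:
  fixes D :: "nat \<Rightarrow> real"
  assumes D: "\<And>n. D n \<le> c + a ^ n * x" and a: "0 \<le> a" "a < 1" and c: "0 < c"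
  shows "\<exists>n0. \<forall>n\<ge>n0. D n \<le> 2 * c"
proof -
  have "(\<lambda>n. a ^ n * x) \<longlonglongrightarrow> 0 * x"
    using a by (intro tendsto_mult LIMSEQ_power_zero tendsto_const) simp
  then have "eventually (\<lambda>n. a ^ n * x < c) sequentially"
    using c by (simp add: order_tendstoD(2))
  then obtain n0 where "\<And>n. n \<ge> n0 \<Longrightarrow> a ^ n * x < c"
    unfolding eventually_sequentially by blast
  then show ?thesis
    using D by (smt (verit))
qed

lemma d_MK_iterate_markov_op_projection_le:
  fixes \<phi> :: "nat \<Rightarrow> 'a::metric_space \<Rightarrow> 'a"
  assumes Y: "proper_set Y" and \<nu>: "\<nu> \<in> probs_cs Y"
    and \<mu>: "\<mu> \<in> probs_cs UNIV" and \<mu>_fixed: "markov_op L p \<phi> \<mu> = \<mu>"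
    and p: "\<And>j. j < L \<Longrightarrow> 0 \<le> p j" and p_sum: "(\<Sum>j<L. p j) = 1"
    and \<phi>: "\<And>j. j < L \<Longrightarrow> \<alpha>-lipschitz_on UNIV (\<phi> j)" and \<alpha>: "0 \<le> \<alpha>" "\<alpha> < 1"
    and r: "r \<in> borel_measurable borel" and r_Y: "range r \<subseteq> Y" and r_close: "\<And>x. dist x (r x) \<le> \<epsilon>"
  shows "d_MK (incl_push ((markov_op L p (\<lambda>j. r \<circ> \<phi> j) ^^ n) \<nu>)) \<mu>
    \<le> \<epsilon> / (1 - \<alpha>) + \<alpha> ^ n * d_MK (incl_push \<nu>) \<mu>"
proof -
  define T where "T = markov_op L p (\<lambda>j. r \<circ> \<phi> j)"
  have iterate: "(T ^^ n) \<nu> \<in> probs_cs Y" for n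
  proof (induction n)
    case (Suc n)
    have "T ((T ^^ n) \<nu>) \<in> probs_cs Y"
      unfolding T_def using Suc[unfolded T_def] r_Y p p_sum borel_measurable_lipschitz[OF \<phi>]
      by (intro markov_op_probs_cs_proper_set[OF Y] measurable_comp[OF _ r]) auto
    then show ?case
      by simp
  qed (simp add: \<nu>)
  have "d_MK (T ((T ^^ n) \<nu>)) \<mu> \<le> \<epsilon> + \<alpha> * d_MK ((T ^^ n) \<nu>) \<mu>" for n
    unfolding T_def
    by (rule d_MK_markov_op_projection_le[OF iterate[unfolded T_def] \<mu> \<mu>_fixed p p_sum \<phi> r r_Y r_close])
  then have "d_MK ((T ^^ n) \<nu>) \<mu> \<le> \<epsilon> / (1 - \<alpha>) + \<alpha> ^ n * d_MK ((T ^^ 0) \<nu>) \<mu>"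
    using \<alpha> order_trans[OF zero_le_dist r_close] by (intro affine_recurrence_le) auto
  moreover have "d_MK (incl_push ((T ^^ n) \<nu>)) \<mu> = d_MK ((T ^^ n) \<nu>) \<mu>" for n
    by (rule d_MK_incl_push[OF sets_probs_cs[OF iterate]])
  ultimately show ?thesis
    using d_MK_incl_push[OF sets_probs_cs[OF \<nu>]] unfolding T_def by simp
qed

theorem theorem4p3:
  fixes \<phi> :: "nat \<Rightarrow> 'a::complete_space \<Rightarrow> 'a"
    and p :: "nat \<Rightarrow> real" and L :: nat
    and \<epsilon> :: real and Xh :: "'a set" and r :: "'a \<Rightarrow> 'a"
    and \<mu>S :: "'a measure"
  assumes L: "L \<ge> 1"
    and p_pos: "\<And>j. j < L \<Longrightarrow> p j > 0"
    and p_sum: "(\<Sum>j<L. p j) = 1"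
    and contr: "\<And>j. j < L \<Longrightarrow> banach_contraction (\<phi> j)"
    and eps: "\<epsilon> > 0"
    and Xh_net: "eps_net \<epsilon> Xh" and Xh_proper: "proper_set Xh"
    and r_meas: "r \<in> borel_measurable borel"
    and r_proj: "eps_projection \<epsilon> Xh r"
    and hutch: "\<mu>S \<in> probs_cs (UNIV :: 'a set)" "markov_op L p \<phi> \<mu>S = \<mu>S"
  shows "\<forall>\<nu>\<in>probs_cs Xh.
     (\<forall>n::nat. d_MK (incl_push ((markov_op L p (\<lambda>j. r \<circ> \<phi> j) ^^ n) \<nu>)) \<mu>S
        \<le> \<epsilon> / (1 - Max ((\<lambda>j. lip_const (\<phi> j)) ` {..<L}))
          + Max ((\<lambda>j. lip_const (\<phi> j)) ` {..<L}) ^ n * d_MK (incl_push \<nu>) \<mu>S)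
   \<and> (\<exists>n0::nat. \<forall>n\<ge>n0. d_MK (incl_push ((markov_op L p (\<lambda>j. r \<circ> \<phi> j) ^^ n) \<nu>)) \<mu>S
        \<le> 2 * \<epsilon> / (1 - Max ((\<lambda>j. lip_const (\<phi> j)) ` {..<L})))"
proof -
  define \<alpha> where "\<alpha> = Max ((\<lambda>j. lip_const (\<phi> j)) ` {..<L})"
  have "finite {..<L}" "{..<L} \<noteq> {}"
    using L by (auto simp: lessThan_empty_iff)
  then have \<alpha>: "\<alpha> < 1" "\<And>j. j < L \<Longrightarrow> \<alpha>-lipschitz_on UNIV (\<phi> j)"
    using Max_lip_const_contractions[of "{..<L}" \<phi>] contr unfolding \<alpha>_def lessThan_iff by blast+
  then have "0 \<le> \<alpha>"
    using L lipschitz_on_nonneg by force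
  have p: "\<And>j. j < L \<Longrightarrow> 0 \<le> p j"
    using p_pos less_imp_le by blast
  have r: "range r \<subseteq> Xh" "\<And>x. dist x (r x) \<le> \<epsilon>"
    using r_proj unfolding eps_projection_def by auto
  note bound = d_MK_iterate_markov_op_projection_le[OF Xh_proper _ hutch p p_sum \<alpha>(2) \<open>0 \<le> \<alpha>\<close> \<alpha>(1) r_meas r]
  have "0 < \<epsilon> / (1 - \<alpha>)"
    using eps \<alpha>(1) by simp
  then show ?thesis
    unfolding \<alpha>_def[symmetric] times_divide_eq_right[symmetric]
    using bound eventually_le_double_of_geometric_bound[OF bound \<open>0 \<le> \<alpha>\<close> \<alpha>(1)] by blast
qed

end
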